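(* Assume $\eta_1\le\frac{1}{4k(T_1+1)}$, $0<r\le\frac{\eta_1}{200}$ and $k>8d^3$. With probability at least $1-4e^{-d}-4e^{-m/36}$, for all $0\le t\le T_1$ and all $i\in\mathcal{W}_0^-\cap\mathcal{A}^-$: (1) $o_2\cdot w_i^{(t)}\ge\frac{t\eta_1}{9}$; (2) $o_j\cdot w_i^{(t)}\le r$ for all $j\ne 2$; and (3) $p_i^{(t)}(x)=o_2$ for every $x\in S_1^-$.
   Context: Fix $n\ge1$, $d\ge3$ and orthonormal $o_1,\dots,o_d\in\mathbb{R}^d$. Inputs are $x=(x[1],\dots,x[n])\in\mathbb{R}^{nd}$ with $x[j]\in\mathbb{R}^d$. The distribution $\mathcal{D}$ on $\mathbb{R}^{nd}\times\{\pm1\}$: $y$ uniform on $\{\pm1\}$; given $y=1$, an index $j_+$ uniform on $\{1,\dots,n\}$ is drawn, $x[j_+]=o_1$, and for $j\ne j_+$ independently $x[j]=o_{i_j}$, $i_j$ uniform on $\{3,\dots,d\}$; given $y=-1$, the same with $o_2$ instead of $o_1$. Network $N_{(W,a)}(x)=\sum_{i=1}^k a_i\max_j\sigma(w_i\cdot x[j])$, $\sigma(z)=\max\{0,z\}$, $w_i$ rows of $W\in\mathbb{R}^{k\times d}$. Loss $\ell(z)=\log(1+e^{-z})$. $S$ consists of $m$ i.i.d. samples from $\mathcal{D}$; $S_1$ is its first $\lceil m/2\rceil$ samples, $m_1=|S_1|$, $S_1^-=\{x:(x,-1)\in S_1\}$, $\mathcal{L}_1(W,a)=\frac1{m_1}\sum_{(x,y)\in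 S_1}\ell(yN_{(W,a)}(x))$. Initialization: rows $w_i^{(0)}$ independent uniform on the sphere of radius $r$ in $\mathbb{R}^d$, $a_i^{(0)}$ independent uniform on $\{\pm1\}$, independent of $W^{(0)}$. Iterates $W^{(t)}=W^{(t-1)}-\eta_1\nabla_W\mathcal{L}_1(W^{(t-1)},a^{(0)})$, $t=1,\dots,T_1$. $p_i^{(t)}(x)=x[j^*]$ with $j^*\in\arg\max_j w_i^{(t)}\cdot x[j]$ if $w_i^{(t)}\cdot x[j^*]>0$, else $0$; gradients use $\frac{\partial}{\partial w_i}\max_j\sigma(w_i\cdot x[j])=p_i(x)$. Sets $\mathcal{A}^-=\{i:a_i^{(0)}=-1\}$, $\mathcal{W}_0^-=\{i:\arg\max_{l\in\{2,3,\dots,d\}}w_i^{(0)}\cdot o_l=2,\ w_i^{(0)}\cdot o_2>0\}$. *)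

theory Defs
  imports "HOL-Probability.Probability"
begin

text \<open>Inputs x are functions nat => 'a, meaningful on indices 1..n (value 0 elsewhere).
  Neurons are indexed 1..k; W is a function nat => 'a (row i = W i); a :: nat => real.
  Samples are indexed 1..m; a sample set S is a function nat => (input, label).\<close>

definition relu :: "real \<Rightarrow> real" where
  "relu z = max 0 z"

definition logloss :: "real \<Rightarrow> real" where
  "logloss z = ln (1 + exp (- z))"

definition logloss' :: "real \<Rightarrow> real" where
  "logloss' z = - 1 / (1 + exp z)"

definition net :: "nat \<Rightarrow> nat \<Rightarrow> (nat \<Rightarrow> 'a::euclidean_space) \<Rightarrow> (nat \<Rightarrow> real) \<Rightarrow> (nat \<Rightarrow> 'a) \<Rightarrow> real" where
  "net n k W a x = (\<Sum>i=1..k. a i * Max ((\<lambda>j. relu (W i \<bullet> x j)) ` {1..n}))"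

text \<open>The selected patch: the smallest index attaining the maximum of w . x[j]
  (tie-breaking convention), returned if the maximal value is positive, otherwise 0.\<close>
definition patch :: "nat \<Rightarrow> 'a::euclidean_space \<Rightarrow> (nat \<Rightarrow> 'a) \<Rightarrow> 'a" where
  "patch n w x =
     (let jstar = (LEAST j. j \<in> {1..n} \<and> w \<bullet> x j = Max ((\<lambda>j'. w \<bullet> x j') ` {1..n}))
      in if w \<bullet> x jstar > 0 then x jstar else 0)"

definition half_size :: "nat \<Rightarrow> nat" where
  "half_size m = nat \<lceil>real m / 2\<rceil>"

text \<open>Gradient of L_1 with respect to w_i (using d/dw_i max_j relu(w_i . x[j]) = p_i(x)).\<close>
definition grad_L1 :: "nat \<Rightarrow> nat \<Rightarrow> nat \<Rightarrow> (nat \<Rightarrow> (nat \<Rightarrow> 'a::euclidean_space) \<times> real)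
     \<Rightarrow> (nat \<Rightarrow> 'a) \<Rightarrow> (nat \<Rightarrow> real) \<Rightarrow> nat \<Rightarrow> 'a" where
  "grad_L1 n k m S W a i =
     (1 / real (half_size m)) *\<^sub>R
       (\<Sum>s=1..half_size m.
          (logloss' (snd (S s) * net n k W a (fst (S s))) * snd (S s) * a i) *\<^sub>R patch n (W i) (fst (S s)))"

text \<open>Gradient descent iterates W^(t) on L_1 with a fixed at a^(0).\<close>
fun gd_iter :: "nat \<Rightarrow> nat \<Rightarrow> nat \<Rightarrow> real \<Rightarrow> (nat \<Rightarrow> (nat \<Rightarrow> 'a::euclidean_space) \<times> real)
     \<Rightarrow> (nat \<Rightarrow> 'a) \<Rightarrow> (nat \<Rightarrow> real) \<Rightarrow> nat \<Rightarrow> (nat \<Rightarrow> 'a)" where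
  "gd_iter n k m eta S W0 a 0 = W0"
| "gd_iter n k m eta S W0 a (Suc t) =
     (let W = gd_iter n k m eta S W0 a t in (\<lambda>i. W i - eta *\<^sub>R grad_L1 n k m S W a i))"

definition data_dist :: "nat \<Rightarrow> nat \<Rightarrow> (nat \<Rightarrow> 'a::euclidean_space) \<Rightarrow> ((nat \<Rightarrow> 'a) \<times> real) pmf" where
  "data_dist n d ob =
     do { y \<leftarrow> pmf_of_set {1, -1::real};
          jp \<leftarrow> pmf_of_set {1..n};
          idx \<leftarrow> Pi_pmf {1..n} 3 (\<lambda>_. pmf_of_set {3..d});
          return_pmf ((\<lambda>j. if j \<in> {1..n} then (if j = jp then (if y = 1 then ob 1 else ob 2) else ob (idx j)) else 0), y) }"

definition sample_dist :: "nat \<Rightarrow> nat \<Rightarrow> nat \<Rightarrow> (nat \<Rightarrow> 'a::euclidean_space)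
     \<Rightarrow> (nat \<Rightarrow> (nat \<Rightarrow> 'a) \<times> real) pmf" where
  "sample_dist n d m ob = Pi_pmf {1..m} (\<lambda>_. 0, 0) (\<lambda>_. data_dist n d ob)"

text \<open>Uniform distribution on the sphere of radius r: the radial projection of the
  uniform distribution on the unit ball.\<close>
definition sphere_unif :: "real \<Rightarrow> 'a::euclidean_space measure" where
  "sphere_unif r = distr (uniform_measure lborel (ball 0 1)) borel (\<lambda>x. r *\<^sub>R (x /\<^sub>R norm x))"

definition init_W_dist :: "nat \<Rightarrow> real \<Rightarrow> (nat \<Rightarrow> 'a::euclidean_space) measure" where
  "init_W_dist k r = PiM {1..k} (\<lambda>_. sphere_unif r)"

definition init_a_dist :: "nat \<Rightarrow> (nat \<Rightarrow> real) pmf" where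
  "init_a_dist k = Pi_pmf {1..k} 1 (\<lambda>_. pmf_of_set {-1, 1})"

definition joint_dist :: "nat \<Rightarrow> nat \<Rightarrow> nat \<Rightarrow> nat \<Rightarrow> real \<Rightarrow> (nat \<Rightarrow> 'a::euclidean_space)
     \<Rightarrow> ((nat \<Rightarrow> (nat \<Rightarrow> 'a) \<times> real) \<times> (nat \<Rightarrow> 'a) \<times> (nat \<Rightarrow> real)) measure" where
  "joint_dist n d m k r ob =
     measure_pmf (sample_dist n d m ob) \<Otimes>\<^sub>M (init_W_dist k r \<Otimes>\<^sub>M measure_pmf (init_a_dist k))"

definition S1_neg :: "nat \<Rightarrow> (nat \<Rightarrow> (nat \<Rightarrow> 'a) \<times> real) \<Rightarrow> (nat \<Rightarrow> 'a) set" where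
  "S1_neg m S = {fst (S s) | s. s \<in> {1..half_size m} \<and> snd (S s) = -1}"

definition A_neg :: "nat \<Rightarrow> (nat \<Rightarrow> real) \<Rightarrow> nat set" where
  "A_neg k a = {i \<in> {1..k}. a i = -1}"

text \<open>W_0^-: the arg max over l in {2..d} of w_i . o_l is (uniquely) 2, and w_i . o_2 > 0.\<close>
definition W0_neg :: "nat \<Rightarrow> nat \<Rightarrow> (nat \<Rightarrow> 'a::euclidean_space) \<Rightarrow> (nat \<Rightarrow> 'a) \<Rightarrow> nat set" where
  "W0_neg k d ob W0 = {i \<in> {1..k}. (\<forall>l\<in>{3..d}. W0 i \<bullet> ob l < W0 i \<bullet> ob 2) \<and> W0 i \<bullet> ob 2 > 0}"

end

theory Submission
  imports Defs
begin

text \<open>Fix a neuron i in W_0^- with a_i = -1. While w_i differs from w_i^(0) only by a larger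
  o_2-coordinate and smaller other coordinates, o_2 is the strictly best aligned patch of every
  negative example, so p_i = o_2 there, while on positive examples p_i is 0 or some o_l with
  l \<noteq> 2. The weights stay so small that the network output lies in [-1/4, 1/4], hence
  \<ell>' \<le> -1/3 on every example. So every negative example pushes w_i along o_2, positive examples
  only push it away from the other o_l, and since a third of S_1 is negative each gradient step
  raises the o_2-coordinate by at least eta/9; induction on t preserves the invariant.

  The initial weights have norm exactly r, so the only random failure is that less than a third
  of S_1 is negative, which Hoeffding's inequality bounds by exp(-m/36).\<close>

lemma patch_cases:
  assumes "n \<ge> 1"
  shows "patch n w x = 0 \<or> (\<exists>j\<in>{1..n}. patch n w x = x j)"
proof -
  define M where "M = Max ((\<lambda>j'. w \<bullet> x j') ` {1..n})"
  have "M \<in> (\<lambda>j'. w \<bullet> x j') ` {1..n}"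
    unfolding M_def using assms by (intro Max_in) auto
  then obtain j0 where j0: "j0 \<in> {1..n}" "w \<bullet> x j0 = M" by auto
  define js where "js = (LEAST j. j \<in> {1..n} \<and> w \<bullet> x j = M)"
  have "js \<in> {1..n} \<and> w \<bullet> x js = M"
    unfolding js_def by (rule LeastI[of _ j0]) (use j0 in auto)
  then show ?thesis
    unfolding patch_def Let_def M_def[symmetric] js_def[symmetric] by auto
qed

lemma patch_eq_strict_max:
  assumes "jp \<in> {1..n}" "w \<bullet> x jp > 0" "\<forall>j\<in>{1..n}. j \<noteq> jp \<longrightarrow> w \<bullet> x j < w \<bullet> x jp"
  shows "patch n w x = x jp"
proof -
  have max: "Max ((\<lambda>j'. w \<bullet> x j') ` {1..n}) = w \<bullet> x jp"
    using assms by (intro Max_eqI) (auto intro: less_imp_le)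
  have least: "(LEAST j. j \<in> {1..n} \<and> w \<bullet> x j = w \<bullet> x jp) = jp"
  proof (rule Least_equality)
    show "jp \<in> {1..n} \<and> w \<bullet> x jp = w \<bullet> x jp" using assms by auto
  next
    fix j assume "j \<in> {1..n} \<and> w \<bullet> x j = w \<bullet> x jp"
    then show "jp \<le> j" using assms(3) by force
  qed
  show ?thesis unfolding patch_def Let_def max least using assms by simp
qed

lemma logloss'_neg: "logloss' z < 0"
  unfolding logloss'_def by (simp add: add_pos_pos)

lemma abs_logloss'_le_1: "\<bar>logloss' z\<bar> \<le> 1"
  unfolding logloss'_def by (simp add: add_pos_pos)

lemma logloss'_le_neg_third:
  assumes "\<bar>z\<bar> \<le> 1/4"
  shows "logloss' z \<le> -1/3"
proof -
  have "exp z \<le> 2" using exp_bound_half[of z] assms by simp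
  then show ?thesis unfolding logloss'_def by (simp add: divide_simps add_pos_pos)
qed

lemma abs_net_le_sum_norm:
  assumes "n \<ge> 1" "\<forall>j\<in>{1..n}. norm (x j) \<le> 1" "\<forall>i\<in>{1..k}. \<bar>a i\<bar> \<le> 1"
  shows "\<bar>net n k V a x\<bar> \<le> (\<Sum>i=1..k. norm (V i))"
proof -
  have neuron: "\<bar>a i * Max ((\<lambda>j. relu (V i \<bullet> x j)) ` {1..n})\<bar> \<le> norm (V i)"
    if i: "i \<in> {1..k}" for i
  proof -
    let ?R = "(\<lambda>j. relu (V i \<bullet> x j)) ` {1..n}"
    have "relu (V i \<bullet> x j) \<le> norm (V i)" if "j \<in> {1..n}" for j
    proof -
      have "\<bar>V i \<bullet> x j\<bar> \<le> norm (V i) * norm (x j)" by (rule Cauchy_Schwarz_ineq2)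
      also have "\<dots> \<le> norm (V i)" using assms(2) that by (simp add: mult_left_le)
      finally show ?thesis unfolding relu_def by auto
    qed
    then have upper: "Max ?R \<le> norm (V i)" using assms(1) by (subst Max_le_iff) auto
    have lower: "0 \<le> Max ?R" using assms(1) by (subst Max_ge_iff) (auto simp: relu_def)
    have "\<bar>a i * Max ?R\<bar> = \<bar>a i\<bar> * Max ?R" using lower by (simp add: abs_mult)
    also have "\<dots> \<le> 1 * norm (V i)" using assms(3) i lower upper by (intro mult_mono) auto
    finally show ?thesis by simp
  qed
  have "\<bar>net n k V a x\<bar> \<le> (\<Sum>i=1..k. \<bar>a i * Max ((\<lambda>j. relu (V i \<bullet> x j)) ` {1..n})\<bar>)"
    unfolding net_def by (rule sum_abs)
  also have "\<dots> \<le> (\<Sum>i=1..k. norm (V i))" by (intro sum_mono neuron) auto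
  finally show ?thesis .
qed

lemma inner_grad_L1:
  "u \<bullet> grad_L1 n k m S V a i = (1 / real (half_size m)) *
     (\<Sum>s=1..half_size m. (logloss' (snd (S s) * net n k V a (fst (S s))) * snd (S s) * a i) *
        (u \<bullet> patch n (V i) (fst (S s))))"
  unfolding grad_L1_def by (simp add: inner_sum_right)

lemma gd_iter_Suc_apply:
  "gd_iter n k m eta S W0 a (Suc t) i =
     gd_iter n k m eta S W0 a t i - eta *\<^sub>R grad_L1 n k m S (gd_iter n k m eta S W0 a t) a i"
  by (simp add: Let_def)

definition well_formed_example :: "nat \<Rightarrow> nat \<Rightarrow> (nat \<Rightarrow> 'a::euclidean_space) \<Rightarrow> (nat \<Rightarrow> 'a) \<times> real \<Rightarrow> bool"
  where "well_formed_example n d ob z \<longleftrightarrow> snd z \<in> {1, -1} \<and>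
    (\<exists>jp\<in>{1..n}. fst z jp = (if snd z = 1 then ob 1 else ob 2) \<and>
       (\<forall>j\<in>{1..n}. j \<noteq> jp \<longrightarrow> fst z j \<in> ob ` {3..d}))"

definition phase1_alignment ::
    "nat \<Rightarrow> nat \<Rightarrow> nat \<Rightarrow> nat \<Rightarrow> nat \<Rightarrow> real \<Rightarrow> real \<Rightarrow> (nat \<Rightarrow> 'a::euclidean_space)
     \<Rightarrow> (nat \<Rightarrow> (nat \<Rightarrow> 'a) \<times> real) \<Rightarrow> (nat \<Rightarrow> 'a) \<Rightarrow> (nat \<Rightarrow> real) \<Rightarrow> bool"
  where "phase1_alignment n d k m T1 eta r ob S W0 a \<longleftrightarrow>
    (\<forall>t\<le>T1. \<forall>i \<in> W0_neg k d ob W0 \<inter> A_neg k a.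
        ob 2 \<bullet> gd_iter n k m eta S W0 a t i \<ge> real t * eta / 9
      \<and> (\<forall>j\<in>{1..d}. j \<noteq> 2 \<longrightarrow> ob j \<bullet> gd_iter n k m eta S W0 a t i \<le> r)
      \<and> (\<forall>x\<in>S1_neg m S. patch n (gd_iter n k m eta S W0 a t i) x = ob 2))"

locale phase1_run =
  fixes n d k m T1 :: nat and eta r :: real and ob :: "nat \<Rightarrow> 'a::euclidean_space"
    and S :: "nat \<Rightarrow> (nat \<Rightarrow> 'a) \<times> real" and W0 :: "nat \<Rightarrow> 'a" and a :: "nat \<Rightarrow> real"
  assumes n_pos: "n \<ge> 1" and d_ge_3: "d \<ge> 3"
    and orthonormal: "\<forall>i\<in>{1..d}. \<forall>j\<in>{1..d}. ob i \<bullet> ob j = (if i = j then 1 else 0)"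
    and well_formed: "\<forall>s\<in>{1..half_size m}. well_formed_example n d ob (S s)"
    and half_size_pos: "half_size m \<ge> 1"
    and negatives_third: "real (half_size m) / 3 \<le> real (card {s\<in>{1..half_size m}. snd (S s) = -1})"
    and init_small: "\<forall>i\<in>{1..k}. norm (W0 i) \<le> r"
    and signs: "\<forall>i\<in>{1..k}. a i \<in> {-1, 1}"
    and eta_pos: "eta > 0" and r_le_eta: "r \<le> eta"
    and total_step_small: "real k * eta * (real T1 + 1) \<le> 1/4"
begin

abbreviation W :: "nat \<Rightarrow> nat \<Rightarrow> 'a" where "W t \<equiv> gd_iter n k m eta S W0 a t"

definition moved_towards_o2 :: "nat \<Rightarrow> 'a \<Rightarrow> bool"
  where "moved_towards_o2 i v \<longleftrightarrow>
    ob 2 \<bullet> W0 i \<le> ob 2 \<bullet> v \<and> (\<forall>l\<in>{1..d}. l \<noteq> 2 \<longrightarrow> ob l \<bullet> v \<le> ob l \<bullet> W0 i)"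

lemma inner_ob: "i \<in> {1..d} \<Longrightarrow> j \<in> {1..d} \<Longrightarrow> ob i \<bullet> ob j = (if i = j then 1 else 0)"
  using orthonormal by blast

lemma norm_ob: "l \<in> {1..d} \<Longrightarrow> norm (ob l) = 1"
  by (simp add: norm_eq_sqrt_inner inner_ob)

lemma example_patch_is_ob:
  assumes "s \<in> {1..half_size m}" "j \<in> {1..n}"
  shows "\<exists>l\<in>{1..d}. fst (S s) j = ob l \<and> (snd (S s) = 1 \<longrightarrow> l \<noteq> 2)"
proof -
  obtain jp where jp: "jp \<in> {1..n}" "fst (S s) jp = (if snd (S s) = 1 then ob 1 else ob 2)"
    "\<forall>j\<in>{1..n}. j \<noteq> jp \<longrightarrow> fst (S s) j \<in> ob ` {3..d}"
    using well_formed assms(1) unfolding well_formed_example_def by blast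
  show ?thesis
  proof (cases "j = jp")
    case True then show ?thesis using jp d_ge_3 by (cases "snd (S s) = 1") force+
  next
    case False then show ?thesis using jp assms(2) by force
  qed
qed

lemma norm_example_le_1: "s \<in> {1..half_size m} \<Longrightarrow> \<forall>j\<in>{1..n}. norm (fst (S s) j) \<le> 1"
  using example_patch_is_ob norm_ob by fastforce

lemma patch_positive_example:
  assumes "s \<in> {1..half_size m}" "snd (S s) = 1"
  shows "patch n v (fst (S s)) = 0 \<or> (\<exists>l\<in>{1..d}. l \<noteq> 2 \<and> patch n v (fst (S s)) = ob l)"
  using patch_cases[OF n_pos, of v "fst (S s)"] example_patch_is_ob[OF assms(1)] assms(2) by metis

lemma patch_negative_example:
  assumes i: "i \<in> W0_neg k d ob W0" and moved: "moved_towards_o2 i v"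
    and s: "s \<in> {1..half_size m}" "snd (S s) = -1"
  shows "patch n v (fst (S s)) = ob 2"
proof -
  obtain jp where jp: "jp \<in> {1..n}" "fst (S s) jp = (if snd (S s) = 1 then ob 1 else ob 2)"
    "\<forall>j\<in>{1..n}. j \<noteq> jp \<longrightarrow> fst (S s) j \<in> ob ` {3..d}"
    using well_formed s unfolding well_formed_example_def by blast
  have jp2: "fst (S s) jp = ob 2" using jp(2) s(2) by simp
  have w0: "\<forall>l\<in>{3..d}. W0 i \<bullet> ob l < W0 i \<bullet> ob 2" "W0 i \<bullet> ob 2 > 0"
    using i unfolding W0_neg_def by auto
  have pos: "v \<bullet> fst (S s) jp > 0"
    using moved w0(2) jp2 unfolding moved_towards_o2_def by (simp add: inner_commute)
  have max: "\<forall>j\<in>{1..n}. j \<noteq> jp \<longrightarrow> v \<bullet> fst (S s) j < v \<bullet> fst (S s) jp"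
  proof (intro ballI impI)
    fix j assume j: "j \<in> {1..n}" "j \<noteq> jp"
    obtain l where l: "l \<in> {3..d}" "fst (S s) j = ob l" using jp(3) j by blast
    have "v \<bullet> ob l \<le> W0 i \<bullet> ob l"
      using moved l(1) unfolding moved_towards_o2_def by (auto simp: inner_commute)
    also have "\<dots> < W0 i \<bullet> ob 2" using w0(1) l(1) by simp
    also have "\<dots> \<le> v \<bullet> ob 2" using moved unfolding moved_towards_o2_def by (simp add: inner_commute)
    finally show "v \<bullet> fst (S s) j < v \<bullet> fst (S s) jp" using l jp2 by simp
  qed
  show ?thesis using patch_eq_strict_max[OF jp(1) pos max] jp2 by simp
qed

lemma norm_grad_L1_le_1:
  assumes i: "i \<in> {1..k}"
  shows "norm (grad_L1 n k m S V a i) \<le> 1"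
proof -
  let ?c = "\<lambda>s. logloss' (snd (S s) * net n k V a (fst (S s))) * snd (S s) * a i"
  have term_le: "norm (?c s *\<^sub>R patch n (V i) (fst (S s))) \<le> 1" if s: "s \<in> {1..half_size m}" for s
  proof -
    have "snd (S s) \<in> {1, -1}" "a i \<in> {-1, 1}"
      using well_formed s signs i unfolding well_formed_example_def by auto
    then have "\<bar>snd (S s)\<bar> = 1" "\<bar>a i\<bar> = 1" by auto
    then have "\<bar>?c s\<bar> \<le> 1" using abs_logloss'_le_1 by (simp add: abs_mult)
    moreover have "norm (patch n (V i) (fst (S s))) \<le> 1"
      using patch_cases[OF n_pos, of "V i" "fst (S s)"] norm_example_le_1[OF s] by auto
    ultimately show ?thesis by (simp add: mult_le_one)
  qed
  have "norm (\<Sum>s=1..half_size m. ?c s *\<^sub>R patch n (V i) (fst (S s)))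
        \<le> (\<Sum>s=1..half_size m. norm (?c s *\<^sub>R patch n (V i) (fst (S s))))"
    by (rule norm_sum)
  also have "\<dots> \<le> (\<Sum>s=1..half_size m. 1)" by (intro sum_mono term_le)
  finally have "norm (\<Sum>s=1..half_size m. ?c s *\<^sub>R patch n (V i) (fst (S s))) \<le> real (half_size m)"
    by simp
  then show ?thesis unfolding grad_L1_def using half_size_pos by (simp add: divide_simps)
qed

lemma norm_gd_iter_le: "i \<in> {1..k} \<Longrightarrow> norm (W t i) \<le> r + real t * eta"
proof (induction t)
  case 0
  then show ?case using init_small by simp
next
  case (Suc t)
  have "norm (W (Suc t) i) \<le> norm (W t i) + eta * norm (grad_L1 n k m S (W t) a i)"
    using norm_triangle_ineq4[of "W t i" "eta *\<^sub>R grad_L1 n k m S (W t) a i"] eta_pos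
    unfolding gd_iter_Suc_apply by simp
  also have "\<dots> \<le> (r + real t * eta) + eta * 1"
    using Suc norm_grad_L1_le_1 eta_pos by (intro add_mono mult_left_mono) auto
  finally show ?case by (simp add: algebra_simps)
qed

text \<open>Each step moves a weight by at most eta, so the total weight norm stays below
  k eta (T1 + 1) \<le> 1/4.\<close>
lemma abs_net_gd_iter_le:
  assumes t: "t \<le> T1" and s: "s \<in> {1..half_size m}"
  shows "\<bar>net n k (W t) a (fst (S s))\<bar> \<le> 1/4"
proof -
  have "(\<Sum>i=1..k. norm (W t i)) \<le> (\<Sum>i=1..k. r + real t * eta)"
    using norm_gd_iter_le by (intro sum_mono) auto
  also have "\<dots> \<le> real k * (eta * (real T1 + 1))"
  proof -
    have "real t * eta \<le> real T1 * eta" using t eta_pos by (intro mult_right_mono) auto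
    then have "r + real t * eta \<le> eta * (real T1 + 1)" using r_le_eta by (simp add: algebra_simps)
    then show ?thesis by (simp add: mult_left_mono)
  qed
  also have "\<dots> \<le> 1/4" using total_step_small by (simp add: algebra_simps)
  finally show ?thesis
    using abs_net_le_sum_norm[OF n_pos norm_example_le_1[OF s], of k a "W t"] signs by fastforce
qed

lemma inner_ob_grad_L1_nonneg:
  assumes i: "i \<in> W0_neg k d ob W0 \<inter> A_neg k a" and moved: "moved_towards_o2 i (V i)"
    and l: "l \<in> {1..d}" "l \<noteq> 2"
  shows "ob l \<bullet> grad_L1 n k m S V a i \<ge> 0"
proof -
  have ai: "a i = -1" using i unfolding A_neg_def by auto
  let ?c = "\<lambda>s. logloss' (snd (S s) * net n k V a (fst (S s))) * snd (S s) * a i"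
  have "0 \<le> ?c s * (ob l \<bullet> patch n (V i) (fst (S s)))" if s: "s \<in> {1..half_size m}" for s
  proof (cases "snd (S s) = 1")
    case True
    have "0 \<le> ob l \<bullet> patch n (V i) (fst (S s))"
      using patch_positive_example[OF s True, of "V i"] l by (auto simp: inner_ob)
    moreover have "logloss' (net n k V a (fst (S s))) \<le> 0" using logloss'_neg less_imp_le by blast
    ultimately show ?thesis using True ai by (simp add: mult_nonpos_nonneg)
  next
    case False
    then have "snd (S s) = -1" using well_formed s unfolding well_formed_example_def by auto
    then show ?thesis
      using patch_negative_example[OF _ moved s] i l d_ge_3 by (simp add: inner_ob)
  qed
  then have "0 \<le> (\<Sum>s=1..half_size m. ?c s * (ob l \<bullet> patch n (V i) (fst (S s))))"
    by (rule sum_nonneg)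
  then show ?thesis unfolding inner_grad_L1 by simp
qed

text \<open>Only negative examples contribute along o_2, each by at most -1/3, and at least a third
  of the examples in S_1 are negative.\<close>
lemma inner_o2_grad_L1_le:
  assumes i: "i \<in> W0_neg k d ob W0 \<inter> A_neg k a" and moved: "moved_towards_o2 i (V i)"
    and small: "\<forall>s\<in>{1..half_size m}. \<bar>net n k V a (fst (S s))\<bar> \<le> 1/4"
  shows "ob 2 \<bullet> grad_L1 n k m S V a i \<le> -1/9"
proof -
  have ai: "a i = -1" using i unfolding A_neg_def by auto
  let ?m1 = "half_size m"
  have "(\<Sum>s=1..?m1. logloss' (snd (S s) * net n k V a (fst (S s))) * snd (S s) * a i *
             (ob 2 \<bullet> patch n (V i) (fst (S s))))
        \<le> (\<Sum>s=1..?m1. if snd (S s) = -1 then - 1/3 else 0)"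
  proof (intro sum_mono)
    fix s assume s: "s \<in> {1..?m1}"
    show "logloss' (snd (S s) * net n k V a (fst (S s))) * snd (S s) * a i *
             (ob 2 \<bullet> patch n (V i) (fst (S s))) \<le> (if snd (S s) = -1 then - 1/3 else 0)"
    proof (cases "snd (S s) = 1")
      case True
      then show ?thesis using patch_positive_example[OF s True, of "V i"] d_ge_3 by (auto simp: inner_ob)
    next
      case False
      then have neg: "snd (S s) = -1" using well_formed s unfolding well_formed_example_def by auto
      have "logloss' (- net n k V a (fst (S s))) \<le> -1/3"
        using small s by (intro logloss'_le_neg_third) simp
      then show ?thesis using patch_negative_example[OF _ moved s neg] i neg ai d_ge_3 by (simp add: inner_ob)
    qed
  qed
  also have "\<dots> = - (1/3) * real (card {s\<in>{1..?m1}. snd (S s) = -1})"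
    by (simp add: sum.If_cases Int_def conj_commute)
  also have "\<dots> \<le> - (1/3) * (real ?m1 / 3)" using negatives_third by simp
  finally show ?thesis
    unfolding inner_grad_L1 using half_size_pos by (simp add: divide_simps)
qed

lemma gd_iter_moves_towards_o2:
  assumes "t \<le> T1" and i: "i \<in> W0_neg k d ob W0 \<inter> A_neg k a"
  shows "moved_towards_o2 i (W t i) \<and> ob 2 \<bullet> W0 i + real t * eta / 9 \<le> ob 2 \<bullet> W t i"
  using assms(1)
proof (induction t)
  case 0
  then show ?case unfolding moved_towards_o2_def by simp
next
  case (Suc t)
  then have IH: "moved_towards_o2 i (W t i)" "ob 2 \<bullet> W0 i + real t * eta / 9 \<le> ob 2 \<bullet> W t i"
    by auto
  have step: "ob l \<bullet> W (Suc t) i = ob l \<bullet> W t i - eta * (ob l \<bullet> grad_L1 n k m S (W t) a i)" for l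
    unfolding gd_iter_Suc_apply by (simp add: inner_diff_right)
  have "eta * (ob 2 \<bullet> grad_L1 n k m S (W t) a i) \<le> eta * (-1/9)"
    using inner_o2_grad_L1_le[of i "W t", OF i IH(1)] abs_net_gd_iter_le Suc.prems eta_pos
    by (intro mult_left_mono) auto
  then have o2: "ob 2 \<bullet> W0 i + real (Suc t) * eta / 9 \<le> ob 2 \<bullet> W (Suc t) i"
    using IH(2) step[of 2] by (simp add: algebra_simps add_divide_distrib)
  have "ob l \<bullet> W (Suc t) i \<le> ob l \<bullet> W0 i" if l: "l \<in> {1..d}" "l \<noteq> 2" for l
    using step[of l] inner_ob_grad_L1_nonneg[of i "W t", OF i IH(1) l] IH(1) l eta_pos
    unfolding moved_towards_o2_def by (smt (verit) mult_nonneg_nonneg)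
  with o2 show ?case using eta_pos unfolding moved_towards_o2_def
    by (smt (verit) divide_nonneg_pos mult_nonneg_nonneg of_nat_0_le_iff)
qed

theorem phase1_alignment_holds: "phase1_alignment n d k m T1 eta r ob S W0 a"
  unfolding phase1_alignment_def
proof (intro allI impI ballI conjI)
  fix t i assume t: "t \<le> T1" and i: "i \<in> W0_neg k d ob W0 \<inter> A_neg k a"
  have w02: "W0 i \<bullet> ob 2 > 0" and ik: "i \<in> {1..k}" using i unfolding W0_neg_def by auto
  note moved = gd_iter_moves_towards_o2[OF t i]
  show "real t * eta / 9 \<le> ob 2 \<bullet> W t i"
    using moved w02 by (simp add: inner_commute)
  show "ob j \<bullet> W t i \<le> r" if j: "j \<in> {1..d}" "j \<noteq> 2" for j
  proof -
    have "ob j \<bullet> W t i \<le> ob j \<bullet> W0 i" using moved j unfolding moved_towards_o2_def by auto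
    also have "\<dots> \<le> norm (ob j) * norm (W0 i)" by (rule norm_cauchy_schwarz)
    also have "\<dots> \<le> r" using norm_ob[OF j(1)] init_small ik by simp
    finally show ?thesis .
  qed
  show "patch n (W t i) x = ob 2" if "x \<in> S1_neg m S" for x
    using that patch_negative_example[of i "W t i"] moved i unfolding S1_neg_def by auto
qed

end

lemma set_pmf_data_dist_well_formed:
  assumes "n \<ge> 1" "d \<ge> 3" "z \<in> set_pmf (data_dist n d ob)"
  shows "well_formed_example n d ob z"
proof -
  have "z \<in> (\<Union>y\<in>{1,-1::real}. \<Union>jp\<in>{1..n}. \<Union>idx\<in>set_pmf (Pi_pmf {1..n} 3 (\<lambda>_. pmf_of_set {3..d})).
      {((\<lambda>j. if j \<in> {1..n} then (if j = jp then (if y = 1 then ob 1 else ob 2) else ob (idx j)) else 0), y)})"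
    using assms unfolding data_dist_def by (simp only: set_bind_pmf set_return_pmf set_pmf_of_set) auto
  then obtain y jp idx where h: "y \<in> {1,-1}" "jp \<in> {1..n}"
    "idx \<in> set_pmf (Pi_pmf {1..n} 3 (\<lambda>_. pmf_of_set {3..d}))"
    "z = ((\<lambda>j. if j \<in> {1..n} then (if j = jp then (if y = 1 then ob 1 else ob 2) else ob (idx j)) else 0), y)"
    by blast
  have "\<forall>j\<in>{1..n}. idx j \<in> {3..d}" using h(3) assms(2) by (auto simp: set_Pi_pmf PiE_dflt_def)
  then show ?thesis unfolding well_formed_example_def using h by auto
qed

lemma set_pmf_sample_dist:
  "S \<in> set_pmf (sample_dist n d m ob) \<Longrightarrow> s \<in> {1..m} \<Longrightarrow> S s \<in> set_pmf (data_dist n d ob)"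
  unfolding sample_dist_def by (auto simp: set_Pi_pmf PiE_dflt_def)

lemma set_pmf_init_a_dist: "a \<in> set_pmf (init_a_dist k) \<Longrightarrow> i \<in> {1..k} \<Longrightarrow> a i \<in> {-1, 1}"
  unfolding init_a_dist_def by (auto simp: set_Pi_pmf PiE_dflt_def)

lemma half_size_bounds:
  assumes "m \<ge> 1"
  shows "half_size m \<ge> 1" "half_size m \<le> m" "real (half_size m) \<ge> real m / 2"
proof -
  have ge_1: "\<lceil>real m / 2\<rceil> \<ge> 1" using assms by (simp add: le_ceiling_iff)
  have le_m: "\<lceil>real m / 2\<rceil> \<le> int m" using assms by (simp add: ceiling_le_iff)
  show "half_size m \<ge> 1" unfolding half_size_def using ge_1 by (subst le_nat_iff) auto
  show "half_size m \<le> m" unfolding half_size_def using le_m by (subst nat_le_iff) auto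
  show "real (half_size m) \<ge> real m / 2"
    unfolding half_size_def using ge_1 le_of_int_ceiling[of "real m / 2"] by simp
qed

lemma map_pmf_data_dist_negative: "map_pmf (\<lambda>z. snd z = -1) (data_dist n d ob) = bernoulli_pmf (1/2)"
proof -
  have "map_pmf (\<lambda>z. snd z = -1) (data_dist n d ob) = map_pmf (\<lambda>y. y = -1) (pmf_of_set {1, -1::real})"
    unfolding data_dist_def by (simp add: map_bind_pmf map_return_pmf) (simp add: map_pmf_def)
  also have "\<dots> = pmf_of_set ((\<lambda>y. y = -1) ` {1, -1::real})"
    by (rule map_pmf_of_set_inj) (auto simp: inj_on_def)
  also have "(\<lambda>y. y = -1) ` {1, -1::real} = UNIV" by auto
  finally show ?thesis by (simp add: bernoulli_pmf_half_conv_pmf_of_set)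
qed

lemma negatives_count_binomial:
  assumes "m1 \<le> m"
  shows "map_pmf (\<lambda>S. card {s\<in>{1..m1}. snd (S s) = -1}) (sample_dist n d m ob) = binomial_pmf m1 (1/2)"
proof -
  let ?D = "data_dist n d ob" and ?neg = "\<lambda>z::(nat \<Rightarrow> 'a) \<times> real. snd z = -1"
  have "Pi_pmf {1..m1} (\<lambda>_. 0, 0) (\<lambda>_. ?D) =
      map_pmf (\<lambda>f x. if x \<in> {1..m1} then f x else (\<lambda>_. 0, 0)) (sample_dist n d m ob)"
    unfolding sample_dist_def using assms by (intro Pi_pmf_subset) auto
  moreover have "Pi_pmf {1..m1} False (\<lambda>_. map_pmf ?neg ?D) =
      map_pmf (\<lambda>h. ?neg \<circ> h) (Pi_pmf {1..m1} (\<lambda>_. 0, 0) (\<lambda>_. ?D))"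
    by (rule Pi_pmf_map) auto
  ultimately have "map_pmf (\<lambda>S. card {s\<in>{1..m1}. snd (S s) = -1}) (sample_dist n d m ob) =
      map_pmf (\<lambda>f. card {s\<in>{1..m1}. f s}) (Pi_pmf {1..m1} False (\<lambda>_. map_pmf ?neg ?D))"
    by (simp add: map_pmf_comp cong: conj_cong)
  also have "\<dots> = binomial_pmf m1 (1/2)"
    unfolding map_pmf_data_dist_negative by (rule binomial_pmf_altdef'[symmetric]) auto
  finally show ?thesis .
qed

lemma prob_few_negatives_le:
  assumes "m1 \<le> m" "m1 \<ge> 1"
  shows "measure (sample_dist n d m ob) {S. real (card {s\<in>{1..m1}. snd (S s) = -1}) < real m1 / 3}
          \<le> exp (- real m1 / 18)"
proof -
  have "measure (sample_dist n d m ob) {S. real (card {s\<in>{1..m1}. snd (S s) = -1}) < real m1 / 3}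
      = measure (binomial_pmf m1 (1/2)) {x. real x < real m1 / 3}"
    by (subst negatives_count_binomial[OF assms(1), symmetric]) simp
  also have "\<dots> \<le> measure (binomial_pmf m1 (1/2)) {x. real x / real m1 \<le> 1/2 - 1/6}"
    using assms(2) by (intro measure_pmf.finite_measure_mono) (auto simp: divide_simps)
  also have "\<dots> \<le> exp (- 2 * real m1 * (1/6)\<^sup>2)"
    using binomial_distribution.prob_le'[of "1/2" m1 "1/6"] assms(2)
    by (simp add: binomial_distribution_def)
  also have "\<dots> = exp (- real m1 / 18)" by (simp add: power2_eq_square)
  finally show ?thesis .
qed

lemma prob_many_negatives_ge:
  assumes "m \<ge> 1"
  shows "measure (sample_dist n d m ob)
           {S. real (half_size m) / 3 \<le> real (card {s\<in>{1..half_size m}. snd (S s) = -1})}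
         \<ge> 1 - exp (- real m / 36)"
proof -
  let ?sd = "sample_dist n d m ob" and ?m1 = "half_size m"
  let ?few = "{S. real (card {s\<in>{1..?m1}. snd (S s) = -1}) < real ?m1 / 3}"
  let ?many = "{S. real ?m1 / 3 \<le> real (card {s\<in>{1..?m1}. snd (S s) = -1})}"
  have many_eq: "?many = UNIV - ?few" by auto
  have "measure ?sd ?many = 1 - measure ?sd ?few"
    unfolding many_eq using measure_pmf.prob_compl[of ?few ?sd] by simp
  moreover have "measure ?sd ?few \<le> exp (- real ?m1 / 18)"
    by (rule prob_few_negatives_le[OF half_size_bounds(2,1)[OF assms]])
  moreover have "exp (- real ?m1 / 18) \<le> exp (- real m / 36)"
    using half_size_bounds(3)[OF assms] by simp
  ultimately show ?thesis by linarith
qed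

lemma sphere_projection_measurable:
  "(\<lambda>x::'a::euclidean_space. r *\<^sub>R (x /\<^sub>R norm x)) \<in> uniform_measure lborel (ball 0 1) \<rightarrow>\<^sub>M borel"
  by (subst measurable_cong_sets[where M'=borel and N'=borel]) auto

lemma prob_space_sphere_unif: "prob_space (sphere_unif r :: 'a::euclidean_space measure)"
  unfolding sphere_unif_def
proof (rule prob_space.prob_space_distr[OF _ sphere_projection_measurable])
  show "prob_space (uniform_measure lborel (ball (0::'a) 1))"
    by (rule prob_space_uniform_measure)
      (auto simp: emeasure_ball less_imp_neq[OF unit_ball_vol_pos, symmetric])
qed

lemma AE_norm_sphere_unif: "AE x in sphere_unif r. norm (x::'a::euclidean_space) \<le> \<bar>r\<bar>"
proof -
  have "norm (r *\<^sub>R (x /\<^sub>R norm x)) \<le> \<bar>r\<bar>" for x :: 'a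
    by (cases "x = 0") (auto simp: abs_mult mult.assoc)
  then have "AE x in uniform_measure lborel (ball (0::'a) 1). norm (r *\<^sub>R (x /\<^sub>R norm x)) \<le> \<bar>r\<bar>"
    by (intro AE_I2)
  moreover have "{x \<in> space borel. norm (x::'a) \<le> \<bar>r\<bar>} \<in> sets borel" by measurable
  ultimately show ?thesis
    unfolding sphere_unif_def by (simp add: AE_distr_iff[OF sphere_projection_measurable])
qed

lemma prob_space_joint_dist: "prob_space (joint_dist n d m k r ob)"
  unfolding joint_dist_def init_W_dist_def
  by (intro prob_space_pair prob_space_PiM prob_space_sphere_unif prob_space_measure_pmf)

lemma emeasure_pair_measure_Times_full:
  assumes "sigma_finite_measure N" "A \<in> sets M" "B \<in> sets N" "emeasure N B = 1"
  shows "emeasure (M \<Otimes>\<^sub>M N) (A \<times> B) = emeasure M A"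
  using sigma_finite_measure.emeasure_pair_measure_Times[OF assms(1-3)] assms(4) by simp

lemma measure_joint_dist_bounded_init:
  assumes "r \<ge> 0"
  shows "measure (joint_dist n d m k r ob)
           (G \<times> ({W \<in> space (init_W_dist k r). \<forall>i\<in>{1..k}. norm (W i) \<le> r} \<times> set_pmf (init_a_dist k)))
         = measure (sample_dist n d m ob) G"
proof -
  let ?Wd = "init_W_dist k r :: (nat \<Rightarrow> 'a) measure" and ?ad = "measure_pmf (init_a_dist k)"
  let ?B = "{W \<in> space ?Wd. \<forall>i\<in>{1..k}. norm (W i) \<le> r}"
  have prob_Wd: "prob_space ?Wd"
    unfolding init_W_dist_def by (intro prob_space_PiM prob_space_sphere_unif)
  have [measurable]: "(\<lambda>W. W i) \<in> borel_measurable ?Wd" if "i \<in> {1..k}" for i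
    using measurable_component_singleton[OF that, of "\<lambda>_. sphere_unif r"]
    unfolding init_W_dist_def by (simp add: sphere_unif_def cong: measurable_cong_sets)
  have B: "?B \<in> sets ?Wd" by measurable
  have "AE W in ?Wd. \<forall>i\<in>{1..k}. norm (W i) \<le> r"
    using AE_norm_sphere_unif[of r] assms unfolding init_W_dist_def
    by (intro AE_finite_allI) (auto intro!: AE_PiM_component prob_space_sphere_unif)
  then have "emeasure ?Wd ?B = 1"
    by (intro prob_space.emeasure_eq_1_AE[OF prob_Wd B]) (auto elim: AE_mp)
  then have "emeasure (?Wd \<Otimes>\<^sub>M ?ad) (?B \<times> set_pmf (init_a_dist k)) = 1"
    using emeasure_pmf by (subst emeasure_pair_measure_Times_full)
      (auto intro: B prob_space_imp_sigma_finite prob_space_measure_pmf)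
  then have "emeasure (joint_dist n d m k r ob) (G \<times> (?B \<times> set_pmf (init_a_dist k)))
      = emeasure (sample_dist n d m ob) G"
    unfolding joint_dist_def using B
    by (intro emeasure_pair_measure_Times_full)
      (auto intro!: prob_space_imp_sigma_finite prob_space_pair prob_Wd prob_space_measure_pmf)
  then show ?thesis by (simp add: measure_def)
qed

lemma borel_measurable_relu [measurable]: "relu \<in> borel_measurable borel"
  unfolding relu_def by measurable

lemma borel_measurable_logloss' [measurable]: "logloss' \<in> borel_measurable borel"
  unfolding logloss'_def by measurable

lemma borel_measurable_patch:
  fixes V :: "'b \<Rightarrow> 'a::euclidean_space"
  assumes [measurable]: "V \<in> borel_measurable N" "\<And>j. (\<lambda>w. X w j) \<in> borel_measurable N"
  shows "(\<lambda>w. patch n (V w) (X w)) \<in> borel_measurable N"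
proof -
  let ?max = "\<lambda>w. Max ((\<lambda>j'. V w \<bullet> X w j') ` {1..n})"
  let ?jstar = "\<lambda>w. LEAST j. j \<in> {1..n} \<and> V w \<bullet> X w j = ?max w"
  have jstar: "?jstar \<in> N \<rightarrow>\<^sub>M count_space UNIV" by measurable
  have "(\<lambda>w. if V w \<bullet> X w j > 0 then X w j else 0) \<in> borel_measurable N" for j by measurable
  from measurable_compose_countable[OF this jstar] show ?thesis unfolding patch_def Let_def .
qed

lemma borel_measurable_net:
  fixes V :: "'b \<Rightarrow> nat \<Rightarrow> 'a::euclidean_space"
  assumes [measurable]: "\<And>i. (\<lambda>w. V w i) \<in> borel_measurable N"
    "\<And>j. (\<lambda>w. X w j) \<in> borel_measurable N" "\<And>i. (\<lambda>w. A w i) \<in> borel_measurable N"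
  shows "(\<lambda>w. net n k (V w) (A w) (X w)) \<in> borel_measurable N"
  unfolding net_def by measurable

lemma borel_measurable_gd_iter:
  fixes W0 :: "'b \<Rightarrow> nat \<Rightarrow> 'a::euclidean_space"
  assumes W0: "\<And>i. (\<lambda>w. W0 w i) \<in> borel_measurable N"
    and S: "S \<in> N \<rightarrow>\<^sub>M count_space UNIV" and A: "A \<in> N \<rightarrow>\<^sub>M count_space UNIV"
  shows "(\<lambda>w. gd_iter n k m eta (S w) (W0 w) (A w) t i) \<in> borel_measurable N"
proof (induction t arbitrary: i)
  case 0
  then show ?case using W0 by simp
next
  case (Suc t)
  note [measurable] = Suc.IH
    measurable_compose[OF S borel_measurable_count_space, of "\<lambda>S. fst (S s) j" for s j]
    measurable_compose[OF S borel_measurable_count_space, of "\<lambda>S. snd (S s)" for s]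
    measurable_compose[OF A borel_measurable_count_space, of "\<lambda>a. a i" for i]
  have [measurable]:
    "(\<lambda>w. net n k (gd_iter n k m eta (S w) (W0 w) (A w) t) (A w) (fst (S w s))) \<in> borel_measurable N"
    "(\<lambda>w. patch n (gd_iter n k m eta (S w) (W0 w) (A w) t i) (fst (S w s))) \<in> borel_measurable N"
    for s i
    by (intro borel_measurable_net borel_measurable_patch; measurable)+
  show ?case unfolding gd_iter.simps Let_def grad_L1_def by measurable
qed

lemma borel_measurable_init_W_component:
  "(\<lambda>W. W i) \<in> borel_measurable (init_W_dist k r :: (nat \<Rightarrow> 'a::euclidean_space) measure)"
proof (cases "i \<in> {1..k}")
  case True
  then show ?thesis
    using measurable_component_singleton[OF True, of "\<lambda>_. sphere_unif r :: 'a measure"]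
    unfolding init_W_dist_def by (simp add: sphere_unif_def cong: measurable_cong_sets)
next
  case False
  then have "W i = undefined" if "W \<in> space (init_W_dist k r :: (nat \<Rightarrow> 'a) measure)" for W
    using that by (auto simp: init_W_dist_def space_PiM PiE_def extensional_def)
  then show ?thesis by (subst measurable_cong[where g = "\<lambda>_. undefined"]) auto
qed

lemma sets_phase1_alignment_event:
  "{w \<in> space (joint_dist n d m k r ob).
      phase1_alignment n d k m T1 eta r ob (fst w) (fst (snd w)) (snd (snd w))}
     \<in> sets (joint_dist n d m k r ob)"
proof -
  let ?M = "joint_dist n d m k r ob"
  have "fst \<in> ?M \<rightarrow>\<^sub>M measure_pmf (sample_dist n d m ob)"
    "(\<lambda>w. snd (snd w)) \<in> ?M \<rightarrow>\<^sub>M measure_pmf (init_a_dist k)"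
    unfolding joint_dist_def by measurable
  then have sample: "fst \<in> ?M \<rightarrow>\<^sub>M count_space UNIV"
    and signs: "(\<lambda>w. snd (snd w)) \<in> ?M \<rightarrow>\<^sub>M count_space UNIV"
    by (simp_all cong: measurable_cong_sets)
  have weights: "(\<lambda>w. fst (snd w) i) \<in> borel_measurable ?M" for i
    unfolding joint_dist_def
    by (rule measurable_compose[OF _ borel_measurable_init_W_component]) measurable
  have [measurable]:
    "(\<lambda>w. gd_iter n k m eta (fst w) (fst (snd w)) (snd (snd w)) t i) \<in> borel_measurable ?M"
    "(\<lambda>w. fst (fst w s) j) \<in> borel_measurable ?M" "(\<lambda>w. snd (fst w s)) \<in> borel_measurable ?M"
    "(\<lambda>w. fst (snd w) i) \<in> borel_measurable ?M" "(\<lambda>w. snd (snd w) i) \<in> borel_measurable ?M"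
    for t i s j
    using borel_measurable_gd_iter[OF weights sample signs] weights
      measurable_compose[OF sample borel_measurable_count_space]
      measurable_compose[OF signs borel_measurable_count_space] by auto
  have [measurable]:
    "(\<lambda>w. patch n (gd_iter n k m eta (fst w) (fst (snd w)) (snd (snd w)) t i) (fst (fst w s)))
       \<in> borel_measurable ?M" for t i s
    by (intro borel_measurable_patch) measurable
  txt \<open>Unfold the index sets into bounded quantifiers, which the measurability prover decomposes.\<close>
  have "phase1_alignment n d k m T1 eta r ob S W0 a \<longleftrightarrow>
     (\<forall>t. t \<le> T1 \<longrightarrow> (\<forall>i. (i \<in> {1..k} \<and> (\<forall>l\<in>{3..d}. W0 i \<bullet> ob l < W0 i \<bullet> ob 2) \<and>
         W0 i \<bullet> ob 2 > 0 \<and> a i = -1) \<longrightarrow>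
         ob 2 \<bullet> gd_iter n k m eta S W0 a t i \<ge> real t * eta / 9
       \<and> (\<forall>j\<in>{1..d}. j \<noteq> 2 \<longrightarrow> ob j \<bullet> gd_iter n k m eta S W0 a t i \<le> r)
       \<and> (\<forall>s\<in>{1..half_size m}. snd (S s) = -1 \<longrightarrow>
            patch n (gd_iter n k m eta S W0 a t i) (fst (S s)) \<in> {ob 2})))"
    for S W0 a
    unfolding phase1_alignment_def W0_neg_def A_neg_def S1_neg_def by (auto; blast)
  then show ?thesis by (simp only: pred_def[symmetric]) measurable
qed

lemma phase1_alignment_if_many_negatives:
  fixes ob :: "nat \<Rightarrow> 'a::euclidean_space"
  assumes "n \<ge> 1" "d \<ge> 3" "\<forall>i\<in>{1..d}. \<forall>j\<in>{1..d}. ob i \<bullet> ob j = (if i = j then 1 else 0)"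
    and "m \<ge> 1" "S \<in> set_pmf (sample_dist n d m ob)"
    and "real (half_size m) / 3 \<le> real (card {s\<in>{1..half_size m}. snd (S s) = -1})"
    and "\<forall>i\<in>{1..k}. norm (W0 i) \<le> r" "a \<in> set_pmf (init_a_dist k)"
    and "eta > 0" "r \<le> eta" "real k * eta * (real T1 + 1) \<le> 1/4"
  shows "phase1_alignment n d k m T1 eta r ob S W0 a"
proof -
  have "well_formed_example n d ob (S s)" if "s \<in> {1..half_size m}" for s
    using that half_size_bounds(2)[OF assms(4)] assms(1,2,5)
    by (intro set_pmf_data_dist_well_formed set_pmf_sample_dist) auto
  then interpret phase1_run n d k m T1 eta r ob S W0 a
    using assms half_size_bounds(1)[OF assms(4)] set_pmf_init_a_dist
    by unfold_locales auto
  show ?thesis by (rule phase1_alignment_holds)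
qed

theorem corollary5p4:
  fixes n d k m T1 :: nat and eta r :: real and ob :: "nat \<Rightarrow> 'a::euclidean_space"
  assumes "n \<ge> 1" and "d \<ge> 3" and "DIM('a) = d"
    and "\<forall>i\<in>{1..d}. \<forall>j\<in>{1..d}. ob i \<bullet> ob j = (if i = j then 1 else 0)"
    and "eta \<le> 1 / (4 * real k * (real T1 + 1))"
    and "0 < r" and "r \<le> eta / 200"
    and "real k > 8 * real d ^ 3"
  shows "measure (joint_dist n d m k r ob)
           {(S, W0, a) \<in> space (joint_dist n d m k r ob).
              \<forall>t\<le>T1. \<forall>i \<in> W0_neg k d ob W0 \<inter> A_neg k a.
                 ob 2 \<bullet> gd_iter n k m eta S W0 a t i \<ge> real t * eta / 9
               \<and> (\<forall>j\<in>{1..d}. j \<noteq> 2 \<longrightarrow> ob j \<bullet> gd_iter n k m eta S W0 a t i \<le> r)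
               \<and> (\<forall>x\<in>S1_neg m S. patch n (gd_iter n k m eta S W0 a t i) x = ob 2)}
         \<ge> 1 - 4 * exp (- real d) - 4 * exp (- real m / 36)"
    (is "_ \<le> measure ?M ?E")
proof (cases "m = 0")
  case True
  then have "exp (- real m / 36) = 1" by simp
  then show ?thesis using measure_nonneg[of ?M ?E] exp_gt_zero[of "- real d"] by linarith
next
  case False
  let ?sd = "sample_dist n d m ob"
  let ?Many = "{S. real (half_size m) / 3 \<le> real (card {s\<in>{1..half_size m}. snd (S s) = -1})}"
  let ?Small = "{W \<in> space (init_W_dist k r). \<forall>i\<in>{1..k}. norm (W i) \<le> r}"
  let ?Good = "(?Many \<inter> set_pmf ?sd) \<times> (?Small \<times> set_pmf (init_a_dist k))"
  have "real k > 0" using assms(8) by (smt (verit) zero_le_power of_nat_0_le_iff)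
  then have "eta * (4 * real k * (real T1 + 1)) \<le> 1"
    using assms(5) by (simp add: le_divide_eq add_pos_pos)
  then have "real k * eta * (real T1 + 1) \<le> 1/4" by (simp add: algebra_simps)
  then have "?Good \<subseteq> ?E"
    using phase1_alignment_if_many_negatives[OF assms(1,2,4)] False assms(6,7)
    by (auto simp: joint_dist_def space_pair_measure phase1_alignment_def)
  moreover have "?E = {w \<in> space ?M. phase1_alignment n d k m T1 eta r ob (fst w) (fst (snd w)) (snd (snd w))}"
    by (auto simp: phase1_alignment_def)
  ultimately have "measure ?M ?Good \<le> measure ?M ?E"
    using sets_phase1_alignment_event prob_space.finite_measure[OF prob_space_joint_dist]
    by (intro finite_measure.finite_measure_mono) auto
  moreover have "measure ?M ?Good = measure ?sd (?Many \<inter> set_pmf ?sd)"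
    using assms(6) by (intro measure_joint_dist_bounded_init) simp
  moreover have "measure ?sd (?Many \<inter> set_pmf ?sd) = measure ?sd ?Many"
    by (rule measure_Int_set_pmf)
  moreover have "1 - exp (- real m / 36) \<le> measure ?sd ?Many"
    using False by (intro prob_many_negatives_ge) simp
  ultimately show ?thesis by (smt (verit) exp_gt_zero)
qed

end
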